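(* Let $A$ be a finite set and let $A^+=\bigcup_{n\in\mathbb{N}}A^n$ be the set of nonempty finite words over $A$. Then $(A^+,\le_{\mathrm{E}})$ is a well partially ordered set, i.e. $\le_{\mathrm{E}}$ is a partial order on $A^+$ satisfying the descending chain condition and having no infinite antichains; equivalently, for every sequence $(\mathbf{x}^{(k)})_{k\in\mathbb{N}}$ in $A^+$ there are $i<j$ with $\mathbf{x}^{(i)}\le_{\mathrm{E}}\mathbf{x}^{(j)}$.
   Context: For $\mathbf{a}=(a_1,\dots,a_n)\in A^+$ and $b\in A$, define $\mathrm{firstOcc}(\mathbf{a},b):=0$ if $b\notin\{a_1,\dots,a_n\}$ and $\mathrm{firstOcc}(\mathbf{a},b):=\min\{i : a_i=b\}$ otherwise. For $\mathbf{a}=(a_1,\dots,a_m)$, $\mathbf{b}=(b_1,\dots,b_n)\in A^+$, we write $\mathbf{a}\le_{\mathrm{E}}\mathbf{b}$ if there is a strictly increasing function $h:\{1,\dots,m\}\to\{1,\dots,n\}$ such that (1) $a_i=b_{h(i)}$ for all $i$; (2) $\{a_1,\dots,a_m\}=\{b_1,\dots,b_n\}$; (3) for every $c\in\{a_1,\dots,a_m\}$, $h(\mathrm{firstOcc}(\mathbf{a},c))=\mathrm{firstOcc}(\mathbf{b},c)$. Such an $h$ is said to witness $\mathbf{a}\le_{\mathrm{E}}\mathbf{b}$. *)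

theory Defs
  imports Main
begin

text \<open>Words are lists; positions are 1-based as in the paper: a_i = a ! (i - 1).\<close>

definition firstOcc :: "'a list \<Rightarrow> 'a \<Rightarrow> nat" where
  "firstOcc a b = (if b \<notin> set a then 0
     else (LEAST i. 1 \<le> i \<and> i \<le> length a \<and> a ! (i - 1) = b))"

definition witnessE :: "'a list \<Rightarrow> 'a list \<Rightarrow> (nat \<Rightarrow> nat) \<Rightarrow> bool" where
  "witnessE a b h \<longleftrightarrow>
     strict_mono_on {1..length a} h \<and>
     h ` {1..length a} \<subseteq> {1..length b} \<and>
     (\<forall>i\<in>{1..length a}. a ! (i - 1) = b ! (h i - 1)) \<and>
     set a = set b \<and>
     (\<forall>c\<in>set a. h (firstOcc a c) = firstOcc b c)"

definition leE :: "'a list \<Rightarrow> 'a list \<Rightarrow> bool" where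
  "leE a b \<longleftrightarrow> (\<exists>h. witnessE a b h)"

definition words_plus :: "'a set \<Rightarrow> 'a list set" where
  "words_plus A = {xs. xs \<noteq> [] \<and> set xs \<subseteq> A}"

end

theory Submission
  imports Defs "HOL-Library.Sublist" "HOL-Library.Infinite_Set"
begin

text \<open>
  Mark every letter of a word by a flag saying whether this position is the
  first occurrence of that letter.  If the marked word of x is a scattered subword of the
  marked word of y and x, y use the same letters, then the embedding of positions witnesses
  x \<le>E y: first occurrences are sent to marked positions of y carrying the same letter,
  i.e. exactly to first occurrences in y.

  The theorem follows: pass by pigeonhole to a subsequence with constant letter set, apply
  Higman's lemma to the marked words over the finite alphabet A \<times> bool.
\<close>

lemma constant_subsequence:
  fixes f :: "nat \<Rightarrow> 'b"
  assumes "finite S" and "\<forall>k. f k \<in> S"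
  obtains \<phi> :: "nat \<Rightarrow> nat" and c where "strict_mono \<phi>" and "\<forall>k. f (\<phi> k) = c"
proof -
  have "finite (range f)" using assms by (metis finite_subset image_subsetI)
  then obtain c where c: "infinite (f -` {c})"
    using inf_img_fin_dom[of f UNIV] by auto
  show thesis
  proof
    show "strict_mono (enumerate (f -` {c}))" using strict_mono_enumerate[OF c] .
    show "\<forall>k. f (enumerate (f -` {c}) k) = c" using enumerate_in_set[OF c] by auto
  qed
qed

section \<open>Higman's lemma\<close>

definition bad :: "(nat \<Rightarrow> 'a list) \<Rightarrow> bool" where
  "bad f \<longleftrightarrow> (\<forall>i j. i < j \<longrightarrow> \<not> subseq (f i) (f j))"

definition bad_over :: "'a set \<Rightarrow> (nat \<Rightarrow> 'a list) \<Rightarrow> bool" where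
  "bad_over S f \<longleftrightarrow> bad f \<and> (\<forall>k. set (f k) \<subseteq> S)"

definition extensible :: "'a set \<Rightarrow> 'a list list \<Rightarrow> bool" where
  "extensible S ws \<longleftrightarrow> (\<exists>g. bad_over S g \<and> (\<forall>i<length ws. g i = ws ! i))"

text \<open>The minimal bad sequence, built greedily: each new word is a shortest word keeping
  the initial segment extensible.\<close>

primrec min_bad_prefix :: "'a set \<Rightarrow> nat \<Rightarrow> 'a list list" where
  "min_bad_prefix S 0 = []"
| "min_bad_prefix S (Suc n) =
     min_bad_prefix S n @ [arg_min length (\<lambda>w. extensible S (min_bad_prefix S n @ [w]))]"

lemma length_min_bad_prefix [simp]: "length (min_bad_prefix S n) = n"
  by (induct n) auto

lemma extensible_snoc:
  assumes "extensible S ws" shows "\<exists>w. extensible S (ws @ [w])"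
proof -
  obtain g where g: "bad_over S g" "\<forall>i<length ws. g i = ws ! i"
    using assms unfolding extensible_def by blast
  then have "\<forall>i<length (ws @ [g (length ws)]). g i = (ws @ [g (length ws)]) ! i"
    by (auto simp: nth_append less_Suc_eq)
  with g(1) show ?thesis unfolding extensible_def by blast
qed

lemma extensible_min_bad_prefix:
  assumes "extensible S []" shows "extensible S (min_bad_prefix S n)"
proof (induct n)
  case (Suc n)
  then obtain w where "extensible S (min_bad_prefix S n @ [w])" using extensible_snoc by blast
  then show ?case
    using arg_min_nat_lemma[of "\<lambda>w. extensible S (min_bad_prefix S n @ [w])" w length] by simp
qed (use assms in simp)

lemma min_bad_prefix_shortest:
  assumes "extensible S (min_bad_prefix S n @ [w])"
  shows "length (min_bad_prefix S (Suc n) ! n) \<le> length w"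
  using arg_min_nat_lemma[of "\<lambda>w. extensible S (min_bad_prefix S n @ [w])" w length] assms
  by (simp add: nth_append)

lemma min_bad_prefix_stable: "i < n \<Longrightarrow> min_bad_prefix S n ! i = min_bad_prefix S (Suc i) ! i"
proof (induct n)
  case (Suc n)
  show ?case
  proof (cases "i < n")
    case True
    then have "min_bad_prefix S (Suc n) ! i = min_bad_prefix S n ! i" by (simp add: nth_append)
    then show ?thesis using Suc.hyps True by simp
  next
    case False
    then have "i = n" using Suc.prems by simp
    then show ?thesis by simp
  qed
qed simp

lemma minimal_bad_sequence:
  assumes "bad_over S f"
  obtains m where "bad_over S m"
    and "\<And>g n. bad_over S g \<Longrightarrow> \<forall>i<n. g i = m i \<Longrightarrow> length (m n) \<le> length (g n)"
proof
  define m where "m i = min_bad_prefix S (Suc i) ! i" for i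
  have prefix: "min_bad_prefix S n ! i = m i" if "i < n" for i n
    using min_bad_prefix_stable[OF that] by (simp add: m_def)
  have "extensible S []" using assms unfolding extensible_def by auto
  then have ext: "extensible S (min_bad_prefix S n)" for n by (rule extensible_min_bad_prefix)
  have agree: "\<exists>g. bad_over S g \<and> (\<forall>i<n. g i = m i)" for n
    using ext[of n] prefix unfolding extensible_def by auto
  show "bad_over S m"
    unfolding bad_over_def bad_def
  proof (intro conjI allI impI)
    fix i j :: nat assume "i < j"
    with agree[of "Suc j"] obtain g where "bad_over S g" "g i = m i" "g j = m j" by auto
    then show "\<not> subseq (m i) (m j)" using \<open>i < j\<close> unfolding bad_over_def bad_def by metis
  next
    fix k
    from agree[of "Suc k"] obtain g where "bad_over S g" "g k = m k" by auto
    then show "set (m k) \<subseteq> S" unfolding bad_over_def by metis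
  qed
  show "length (m n) \<le> length (g n)" if "bad_over S g" "\<forall>i<n. g i = m i" for g n
  proof -
    have "extensible S (min_bad_prefix S n @ [g n])"
      unfolding extensible_def using that
      by (intro exI[of _ g]) (auto simp: nth_append prefix less_Suc_eq)
    then show ?thesis using min_bad_prefix_shortest m_def by metis
  qed
qed

lemma bad_splice_tails:
  assumes bad: "bad m" and \<phi>: "strict_mono \<phi>" and heads: "\<forall>k. m (\<phi> k) = a # t k"
  shows "bad (\<lambda>i. if i < \<phi> 0 then m i else t (i - \<phi> 0))"
  unfolding bad_def
proof (intro allI impI notI)
  fix i j :: nat
  assume ij: "i < j"
    and emb: "subseq (if i < \<phi> 0 then m i else t (i - \<phi> 0))
                     (if j < \<phi> 0 then m j else t (j - \<phi> 0))"
  have tail_emb: "subseq (t k) (m (\<phi> k))" for k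
    using heads by (metis list_emb_Cons subseq_order.order_refl)
  have m_bad: "\<And>p q. p < q \<Longrightarrow> subseq (m p) (m q) \<Longrightarrow> False" using bad unfolding bad_def by blast
  consider "j < \<phi> 0" | "i < \<phi> 0" "\<phi> 0 \<le> j" | "\<phi> 0 \<le> i" by linarith
  then show False
  proof cases
    case 1
    then show False using emb ij m_bad by simp
  next
    case 2
    have "\<phi> 0 \<le> \<phi> (j - \<phi> 0)" using \<phi> by (simp add: strict_mono_less_eq)
    moreover have "subseq (m i) (m (\<phi> (j - \<phi> 0)))"
      using emb 2 tail_emb by (auto intro: subseq_order.order_trans)
    ultimately show False using 2 m_bad by (meson less_le_trans)
  next
    case 3
    have "subseq (t (i - \<phi> 0)) (t (j - \<phi> 0))" using emb 3 ij by simp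
    then have "subseq (m (\<phi> (i - \<phi> 0))) (m (\<phi> (j - \<phi> 0)))" using heads by simp
    moreover have "\<phi> (i - \<phi> 0) < \<phi> (j - \<phi> 0)" using \<phi> 3 ij by (simp add: strict_mono_less)
    ultimately show False using m_bad by blast
  qed
qed

theorem higman:
  fixes f :: "nat \<Rightarrow> 'a list"
  assumes fin: "finite S" and f: "\<forall>k. set (f k) \<subseteq> S"
  shows "\<exists>i j. i < j \<and> subseq (f i) (f j)"
proof (rule ccontr)
  assume "\<not> ?thesis"
  with f have "bad_over S f" unfolding bad_over_def bad_def by blast
  then obtain m where m: "bad_over S m"
    and minimal: "\<And>g n. bad_over S g \<Longrightarrow> \<forall>i<n. g i = m i \<Longrightarrow> length (m n) \<le> length (g n)"
    using minimal_bad_sequence by metis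
  have nonempty: "m i \<noteq> []" for i
    using m unfolding bad_over_def bad_def by (metis lessI list_emb_Nil)
  have "\<forall>k. hd (m k) \<in> S" using m nonempty unfolding bad_over_def by (metis hd_in_set subsetD)
  then obtain \<phi> :: "nat \<Rightarrow> nat" and a where \<phi>: "strict_mono \<phi>" and a: "\<forall>k. hd (m (\<phi> k)) = a"
    using constant_subsequence[OF fin, of "\<lambda>k. hd (m k)"] by blast
  have heads: "\<forall>k. m (\<phi> k) = a # tl (m (\<phi> k))" using a nonempty by (metis list.collapse)
  define g where "g i = (if i < \<phi> 0 then m i else tl (m (\<phi> (i - \<phi> 0))))" for i
  have "bad_over S g"
    using bad_splice_tails[OF _ \<phi> heads] m
    unfolding bad_over_def g_def by (auto dest: list.set_sel(2)[OF nonempty])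
  then have "length (m (\<phi> 0)) \<le> length (g (\<phi> 0))" by (rule minimal) (simp add: g_def)
  moreover have "length (g (\<phi> 0)) < length (m (\<phi> 0))" using nonempty by (simp add: g_def)
  ultimately show False by simp
qed

section \<open>The order \<le>E\<close>

lemma strict_mono_on_interval_ge:
  fixes h :: "nat \<Rightarrow> nat" and n m i :: nat
  assumes mono: "strict_mono_on {1..n} h" and into: "h ` {1..n} \<subseteq> {1..m}"
  shows "i \<in> {1..n} \<Longrightarrow> i \<le> h i"
proof (induct i)
  case (Suc i)
  show ?case
  proof (cases "i = 0")
    case True
    then show ?thesis using into Suc.prems by (auto simp: image_subset_iff)
  next
    case False
    then have "i \<le> h i" and "h i < h (Suc i)"
      using Suc strict_mono_onD[OF mono, of i "Suc i"] by auto
    then show ?thesis by simp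
  qed
qed simp

lemma strict_mono_on_interval_room:
  fixes h :: "nat \<Rightarrow> nat" and n m i :: nat
  assumes mono: "strict_mono_on {1..n} h" and into: "h ` {1..n} \<subseteq> {1..m}"
    and i: "i \<in> {1..n}"
  shows "h i + (n - i) \<le> m"
proof -
  have "i \<le> n" using i by simp
  then have "1 \<le> i \<longrightarrow> h i + (n - i) \<le> m"
  proof (induction i rule: inc_induct)
    case base
    show ?case using into by (auto simp: image_subset_iff)
  next
    case (step k)
    have "1 \<le> k \<longrightarrow> h k < h (Suc k)"
      using step.hyps strict_mono_onD[OF mono, of k "Suc k"] by auto
    then show ?case using step by auto
  qed
  then show ?thesis using i by simp
qed

lemma strict_mono_on_interval_id:
  fixes h :: "nat \<Rightarrow> nat" and n i :: nat
  assumes "strict_mono_on {1..n} h" and "h ` {1..n} \<subseteq> {1..n}" and "i \<in> {1..n}"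
  shows "h i = i"
  using strict_mono_on_interval_ge[OF assms(1,2,3)] strict_mono_on_interval_room[OF assms]
  by (simp add: le_antisym)

lemma witnessE_length:
  assumes "witnessE x y h" shows "length x \<le> length y"
proof (cases "x = []")
  case False
  have mono: "strict_mono_on {1..length x} h" and into: "h ` {1..length x} \<subseteq> {1..length y}"
    using assms unfolding witnessE_def by auto
  have last: "length x \<in> {1..length x}" using False by (simp add: Suc_le_eq)
  show ?thesis
    using strict_mono_on_interval_ge[OF mono into last] into last by fastforce
qed simp

lemma leE_refl: "leE x x"
  unfolding leE_def witnessE_def
  by (rule exI[of _ id]) (auto simp: strict_mono_on_def)

lemma witnessE_comp:
  assumes xy: "witnessE x y h1" and yz: "witnessE y z h2"
  shows "witnessE x z (h2 \<circ> h1)"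
proof -
  have mono1: "strict_mono_on {1..length x} h1" and into1: "h1 ` {1..length x} \<subseteq> {1..length y}"
    and mono2: "strict_mono_on {1..length y} h2"
    using xy yz unfolding witnessE_def by auto
  show ?thesis
    unfolding witnessE_def
  proof (intro conjI ballI)
    show "strict_mono_on {1..length x} (h2 \<circ> h1)"
    proof (rule strict_mono_onI)
      fix r s assume "r \<in> {1..length x}" "s \<in> {1..length x}" "r < s"
      then have "h1 r < h1 s" "h1 r \<in> {1..length y}" "h1 s \<in> {1..length y}"
        using strict_mono_onD[OF mono1] into1 by blast+
      then show "(h2 \<circ> h1) r < (h2 \<circ> h1) s" using mono2 by (simp add: strict_mono_onD)
    qed
    show "(h2 \<circ> h1) ` {1..length x} \<subseteq> {1..length z}"
      using xy yz unfolding witnessE_def by auto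
    show "x ! (i - 1) = z ! ((h2 \<circ> h1) i - 1)" if i: "i \<in> {1..length x}" for i
    proof -
      have "h1 i \<in> {1..length y}" and "x ! (i - 1) = y ! (h1 i - 1)"
        using xy i unfolding witnessE_def by blast+
      then show ?thesis using yz unfolding witnessE_def by simp
    qed
    show "set x = set z" using xy yz unfolding witnessE_def by auto
    show "(h2 \<circ> h1) (firstOcc x c) = firstOcc z c" if "c \<in> set x" for c
      using xy yz that unfolding witnessE_def by auto
  qed
qed

lemma leE_trans: "leE x y \<Longrightarrow> leE y z \<Longrightarrow> leE x z"
  unfolding leE_def using witnessE_comp by blast

text \<open>Antisymmetry: mutual witnesses force equal lengths, and then a witness is the
  identity on positions.\<close>

lemma leE_antisym:
  assumes "leE x y" and "leE y x" shows "x = y"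
proof -
  obtain h1 h2 where h1: "witnessE x y h1" and h2: "witnessE y x h2"
    using assms unfolding leE_def by blast
  have len: "length x = length y"
    using witnessE_length[OF h1] witnessE_length[OF h2] by simp
  have id: "h1 i = i" if "i \<in> {1..length x}" for i
    using h1 that len strict_mono_on_interval_id[of "length x" h1 i]
    unfolding witnessE_def by auto
  have "x ! i = y ! i" if "i < length x" for i
  proof -
    have i: "Suc i \<in> {1..length x}" using that by simp
    then have "x ! (Suc i - 1) = y ! (h1 (Suc i) - 1)" using h1 unfolding witnessE_def by blast
    then show ?thesis using id[OF i] by simp
  qed
  then show ?thesis using len by (simp add: nth_equalityI)
qed

section \<open>Marking first occurrences\<close>

lemma firstOcc_position:
  assumes "c \<in> set a"
  shows "1 \<le> firstOcc a c \<and> firstOcc a c \<le> length a \<and> a ! (firstOcc a c - 1) = c"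
proof -
  let ?P = "\<lambda>i. 1 \<le> i \<and> i \<le> length a \<and> a ! (i - 1) = c"
  obtain i where "i < length a" "a ! i = c" using assms by (metis in_set_conv_nth)
  then have "?P (Suc i)" by simp
  then have "?P (LEAST i. ?P i)" by (rule LeastI)
  then show ?thesis using assms unfolding firstOcc_def by simp
qed

lemma subseq_positions:
  "subseq xs ys \<Longrightarrow> \<exists>p. (\<forall>i<length xs. p i < length ys \<and> xs ! i = ys ! p i)
     \<and> (\<forall>i j. i < j \<and> j < length xs \<longrightarrow> p i < p j)"
proof (induct rule: list_emb.induct)
  case (list_emb_Cons xs ys y)
  then obtain p where "\<forall>i<length xs. p i < length ys \<and> xs ! i = ys ! p i"
    and "\<forall>i j. i < j \<and> j < length xs \<longrightarrow> p i < p j" by blast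
  then show ?case by (intro exI[of _ "\<lambda>i. Suc (p i)"]) auto
next
  case (list_emb_Cons2 x y xs ys)
  then obtain p where p: "\<forall>i<length xs. p i < length ys \<and> xs ! i = ys ! p i"
    and mono: "\<forall>i j. i < j \<and> j < length xs \<longrightarrow> p i < p j" by blast
  define q where "q i = (if i = 0 then 0 else Suc (p (i - 1)))" for i
  have "\<forall>i<length (x # xs). q i < length (y # ys) \<and> (x # xs) ! i = (y # ys) ! q i"
  proof (intro allI impI)
    fix i assume "i < length (x # xs)"
    then show "q i < length (y # ys) \<and> (x # xs) ! i = (y # ys) ! q i"
      using p list_emb_Cons2(1) by (cases i) (auto simp: q_def)
  qed
  moreover have "\<forall>i j. i < j \<and> j < length (x # xs) \<longrightarrow> q i < q j"
  proof (intro allI impI)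
    fix i j assume "i < j \<and> j < length (x # xs)"
    then show "q i < q j" using mono by (cases i; cases j) (auto simp: q_def)
  qed
  ultimately show ?case by blast
qed simp

definition mark_first :: "'a list \<Rightarrow> ('a \<times> bool) list" where
  "mark_first a = map (\<lambda>i. (a ! i, Suc i = firstOcc a (a ! i))) [0..<length a]"

lemma length_mark_first [simp]: "length (mark_first a) = length a"
  by (simp add: mark_first_def)

lemma nth_mark_first:
  "i < length a \<Longrightarrow> mark_first a ! i = (a ! i, Suc i = firstOcc a (a ! i))"
  by (simp add: mark_first_def)

lemma set_mark_first: "set (mark_first a) \<subseteq> set a \<times> UNIV"
  by (auto simp: mark_first_def)

text \<open>Marked positions are first occurrences, so the embedding sends first
  occurrences to first occurrences of the same letter.\<close>

lemma subseq_mark_first_leE: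
  assumes emb: "subseq (mark_first x) (mark_first y)" and letters: "set x = set y"
  shows "leE x y"
proof -
  obtain p where p: "\<forall>i<length x. p i < length y \<and> mark_first x ! i = mark_first y ! p i"
    and mono: "\<forall>i j. i < j \<and> j < length x \<longrightarrow> p i < p j"
    using subseq_positions[OF emb] by auto
  have p_marks: "p i < length y \<and> x ! i = y ! p i \<and>
      (Suc i = firstOcc x (x ! i)) = (Suc (p i) = firstOcc y (y ! p i))" if "i < length x" for i
    using p that by (auto simp: nth_mark_first)
  define h where "h i = Suc (p (i - 1))" for i
  have "witnessE x y h"
    unfolding witnessE_def
  proof (intro conjI ballI)
    show "strict_mono_on {1..length x} h"
    proof (rule strict_mono_onI)
      fix r s assume "r \<in> {1..length x}" "s \<in> {1..length x}" "r < s"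
      then have "r - 1 < s - 1" and "s - 1 < length x" by auto
      then show "h r < h s" using mono by (simp add: h_def)
    qed
    show "h ` {1..length x} \<subseteq> {1..length y}"
      using p_marks by (auto simp: h_def Suc_le_eq)
    show "x ! (i - 1) = y ! (h i - 1)" if "i \<in> {1..length x}" for i
      using p_marks that by (auto simp: h_def)
    show "set x = set y" by (fact letters)
    show "h (firstOcc x c) = firstOcc y c" if c: "c \<in> set x" for c
    proof -
      let ?i = "firstOcc x c - 1"
      have i: "?i < length x" "x ! ?i = c" "Suc ?i = firstOcc x c"
        using firstOcc_position[OF c] by auto
      then have "Suc (p ?i) = firstOcc y (y ! p ?i)" and "y ! p ?i = c"
        using p_marks[OF i(1)] by auto
      then show ?thesis by (simp add: h_def)
    qed
  qed
  then show ?thesis unfolding leE_def by blast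
qed

theorem lemma3p1:
  fixes A :: "'a set"
  assumes "finite A"
  shows "(\<forall>x\<in>words_plus A. leE x x)
    \<and> (\<forall>x\<in>words_plus A. \<forall>y\<in>words_plus A. leE x y \<and> leE y x \<longrightarrow> x = y)
    \<and> (\<forall>x\<in>words_plus A. \<forall>y\<in>words_plus A. \<forall>z\<in>words_plus A.
          leE x y \<and> leE y z \<longrightarrow> leE x z)
    \<and> (\<forall>f :: nat \<Rightarrow> 'a list. (\<forall>k. f k \<in> words_plus A) \<longrightarrow>
          (\<exists>i j. i < j \<and> leE (f i) (f j)))"
proof (intro conjI ballI allI impI)
  show "leE x x" for x by (rule leE_refl)
  show "x = y" if "leE x y \<and> leE y x" for x y using that leE_antisym by blast
  show "leE x z" if "leE x y \<and> leE y z" for x y z using that leE_trans by blast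
  fix f :: "nat \<Rightarrow> 'a list"
  assume f: "\<forall>k. f k \<in> words_plus A"
  then have "\<forall>k. set (f k) \<in> Pow A" unfolding words_plus_def by auto
  then obtain \<psi> :: "nat \<Rightarrow> nat" and S where \<psi>: "strict_mono \<psi>" and S: "\<forall>k. set (f (\<psi> k)) = S"
    using constant_subsequence[of "Pow A" "\<lambda>k. set (f k)"] assms by blast
  have "\<forall>k. set (mark_first (f (\<psi> k))) \<subseteq> A \<times> UNIV"
    using f set_mark_first unfolding words_plus_def by fastforce
  moreover have "finite (A \<times> (UNIV :: bool set))" using assms by simp
  ultimately obtain i j where ij: "i < j"
    and emb: "subseq (mark_first (f (\<psi> i))) (mark_first (f (\<psi> j)))"
    using higman[of "A \<times> UNIV" "\<lambda>k. mark_first (f (\<psi> k))"] by blast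
  have "leE (f (\<psi> i)) (f (\<psi> j))" using subseq_mark_first_leE[OF emb] S by simp
  moreover have "\<psi> i < \<psi> j" using \<psi> ij by (simp add: strict_mono_less)
  ultimately show "\<exists>i j. i < j \<and> leE (f i) (f j)" by blast
qed

end
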